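(* Let $C\subseteq\mathbb{R}^m$ be closed convex and $\ell$ a loss with (sub)gradient $g$ such that $\ell$ is $(h,\phi)$-restorative and $(\ell,C)$ satisfies inward flow. Let $B\ge0$. Then for every $\tilde\theta\in\mathbb{R}^m$ with $\|\Pi_C(\tilde\theta)-\tilde\theta\|_2\le B$ and $\|\tilde\theta\|_2>h+B$, $$\big\langle\tilde\theta,g(\Pi_C(\tilde\theta))\big\rangle\ge\phi(\Pi_C(\tilde\theta)).$$
   Context: $\Pi_C$ is Euclidean projection onto $C$. $\ell$ is $(h,\phi)$-restorative ($h\ge0$, $\phi$ nonnegative) if all subgradients $g$ satisfy $\langle\theta,g(\theta)\rangle\ge\phi(\theta)$ whenever $\|\theta\|_2>h$. $(\ell,C)$ satisfies inward flow if $-g(\theta)\in T_C(\theta)$ for all $\theta$ on the boundary of $C$, where $T_C(x)=\mathrm{cl}\{y:\exists\beta>0,\ x+\varepsilon y\in C\ \forall\varepsilon\in[0,\beta]\}$. *)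

theory Defs
  imports "HOL-Analysis.Analysis"
begin

definition tangent_cone :: "('a::real_normed_vector) set \<Rightarrow> 'a \<Rightarrow> 'a set" where
  "tangent_cone C x = closure {y. \<exists>\<beta>>0. \<forall>\<epsilon>\<in>{0..\<beta>}. x + \<epsilon> *\<^sub>R y \<in> C}"

definition restorative :: "('a::real_inner \<Rightarrow> 'a) \<Rightarrow> real \<Rightarrow> ('a \<Rightarrow> real) \<Rightarrow> bool" where
  "restorative g h \<phi> \<longleftrightarrow> h \<ge> 0 \<and> (\<forall>\<theta>. \<phi> \<theta> \<ge> 0) \<and>
     (\<forall>\<theta>. norm \<theta> > h \<longrightarrow> inner \<theta> (g \<theta>) \<ge> \<phi> \<theta>)"

definition inward_flow :: "('a::real_normed_vector \<Rightarrow> 'a) \<Rightarrow> 'a set \<Rightarrow> bool" where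
  "inward_flow g C \<longleftrightarrow> (\<forall>\<theta>\<in>frontier C. - g \<theta> \<in> tangent_cone C \<theta>)"

end

theory Submission
  imports Defs
begin

(* Write p for the projection of \<theta> onto C and split \<theta> = p + (\<theta> - p).
   Since norm p \<ge> norm \<theta> - B > h, restorativeness gives <p, g p> \<ge> \<phi> p.
   The residual \<theta> - p is an outward normal of C at p: if it is nonzero, p lies on
   the boundary of C, inward flow puts - g p into the tangent cone at p, and that cone
   lies in the half-space of directions having nonpositive inner product with any
   outward normal. Hence <\<theta> - p, g p> \<ge> 0. *)

lemma restorativeD:
  assumes "restorative g h \<phi>" and "norm \<theta> > h"
  shows "inner \<theta> (g \<theta>) \<ge> \<phi> \<theta>"
  using assms unfolding restorative_def by blast

lemma tangent_cone_subset_halfspace: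
  fixes C :: "'a::real_inner set"
  assumes normal: "\<And>c. c \<in> C \<Longrightarrow> inner d (c - x) \<le> 0"
  shows "tangent_cone C x \<subseteq> {y. inner d y \<le> 0}"
  unfolding tangent_cone_def
proof (rule closure_minimal)
  show "closed {y. inner d y \<le> 0}"
    by (rule closed_halfspace_le)
  show "{y. \<exists>\<beta>>0. \<forall>\<epsilon>\<in>{0..\<beta>}. x + \<epsilon> *\<^sub>R y \<in> C} \<subseteq> {y. inner d y \<le> 0}"
  proof
    fix y
    assume "y \<in> {y. \<exists>\<beta>>0. \<forall>\<epsilon>\<in>{0..\<beta>}. x + \<epsilon> *\<^sub>R y \<in> C}"
    then obtain \<beta> where "\<beta> > 0" and "x + \<beta> *\<^sub>R y \<in> C"
      by auto
    then have "\<beta> * inner d y \<le> 0"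
      using normal[of "x + \<beta> *\<^sub>R y"] by simp
    with \<open>\<beta> > 0\<close> show "y \<in> {y. inner d y \<le> 0}"
      by (simp add: mult_le_0_iff)
  qed
qed

lemma normal_imp_notin_interior:
  fixes C :: "'a::real_inner set"
  assumes "d \<noteq> 0" and normal: "\<And>c. c \<in> C \<Longrightarrow> inner d (c - x) \<le> 0"
  shows "x \<notin> interior C"
proof -
  have "C \<subseteq> {y. inner d y \<le> inner d x}"
    using normal by (auto simp: inner_diff_right)
  then have "interior C \<subseteq> {y. inner d y < inner d x}"
    using interior_mono interior_halfspace_le[OF \<open>d \<noteq> 0\<close>] by blast
  then show ?thesis
    by blast
qed

lemma closest_point_in_frontier:
  fixes C :: "'a::euclidean_space set"
  assumes "closed C" and "convex C" and "C \<noteq> {}" and "x \<notin> C"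
  shows "closest_point C x \<in> frontier C"
proof -
  let ?p = "closest_point C x"
  have "?p \<in> C"
    using assms closest_point_in_set by blast
  moreover have "x - ?p \<noteq> 0"
    using \<open>?p \<in> C\<close> \<open>x \<notin> C\<close> by auto
  then have "?p \<notin> interior C"
    using normal_imp_notin_interior closest_point_dot[OF \<open>convex C\<close> \<open>closed C\<close>] by blast
  ultimately show ?thesis
    using \<open>closed C\<close> by (simp add: frontier_def)
qed

lemma inward_flow_inner_closest_point_nonneg:
  fixes C :: "'a::euclidean_space set"
  assumes "closed C" and "convex C" and "C \<noteq> {}" and "inward_flow g C"
  shows "inner (x - closest_point C x) (g (closest_point C x)) \<ge> 0"
proof (cases "x \<in> C")
  case True
  then show ?thesis
    by (simp add: closest_point_self)
next
  case False
  let ?p = "closest_point C x"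
  have "?p \<in> frontier C"
    using assms(1-3) False by (rule closest_point_in_frontier)
  then have "- g ?p \<in> tangent_cone C ?p"
    using \<open>inward_flow g C\<close> unfolding inward_flow_def by blast
  also have "\<dots> \<subseteq> {y. inner (x - ?p) y \<le> 0}"
    using closest_point_dot[OF \<open>convex C\<close> \<open>closed C\<close>] by (rule tangent_cone_subset_halfspace)
  finally show ?thesis
    by simp
qed

theorem lemma7:
  fixes C :: "(real ^ 'm) set" and g :: "real ^ 'm \<Rightarrow> real ^ 'm"
    and \<phi> :: "real ^ 'm \<Rightarrow> real" and h B :: real and \<theta>t :: "real ^ 'm"
  assumes "closed C" and "convex C" and "C \<noteq> {}"
    and "restorative g h \<phi>"
    and "inward_flow g C"
    and "B \<ge> 0"
    and "norm (closest_point C \<theta>t - \<theta>t) \<le> B"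
    and "norm \<theta>t > h + B"
  shows "inner \<theta>t (g (closest_point C \<theta>t)) \<ge> \<phi> (closest_point C \<theta>t)"
proof -
  let ?p = "closest_point C \<theta>t"
  have "norm \<theta>t \<le> norm ?p + norm (?p - \<theta>t)"
    using norm_triangle_ineq[of ?p "\<theta>t - ?p"] by (simp add: norm_minus_commute)
  with assms(7,8) have "norm ?p > h"
    by linarith
  with \<open>restorative g h \<phi>\<close> have "inner ?p (g ?p) \<ge> \<phi> ?p"
    by (rule restorativeD)
  moreover have "inner (\<theta>t - ?p) (g ?p) \<ge> 0"
    using assms(1-3,5) by (rule inward_flow_inner_closest_point_nonneg)
  ultimately show ?thesis
    by (simp add: inner_diff_left)
qed

end
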